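(* Let $U=\{1,2,\dots,N\}$ be a finite population of unit labels and let $\underline{\theta}=(y_1,\dots,y_N)\in\mathbb{R}^N$ be the unknown population parameter vector, where $y_i$ is the response of unit $i$. Let $\delta_1,\dots,\delta_T$ be finitely many candidate sampling designs, and for each $k$ let $\hat\phi_{k,1},\dots,\hat\phi_{k,V_k}$ be finitely many candidate estimators accompanying $\delta_k$; the pair (design $\delta_k$, estimator $\hat\phi_{k,j}$) is called the strategy $\Lambda_{k,j}$. A strategy $\Lambda_{k,j}$ is first selected at random with probability $P(\Lambda_{k,j})$, and then an ordered sample $\underline{s}$ of unit labels (in order of selection, repeats allowed) is drawn with design $\delta_k$. Assume: (i) the probabilities $P(\Lambda_{k,j})$ do not depend on $\underline{\theta}$; (ii) every candidate design is of the conventional and/or adaptive type, i.e. for every ordered sample $\underline{s}$ and every strategy $\Lambda_{k,j}$, $P(\underline{s}\mid \underline{\theta},\Lambda_{k,j})=P(\underline{s}\mid \underline{y}_{\underline{s}},\delta_k)$, where $\underline{y}_{\underline{s}}$ is the vector of responses of the units in $\underline{s}$ (so the selection probability depends on $\underline{\theta}$ only through the responses of the sampled units; for a conventional design it does not depend on $\underline{\theta}$ at all). The observed data is $D_0=d_0=(\Lambda_{k,j},((i,y_i): i\in\underline{s}))$, so that $P_{\underline{\theta}}(D_0=d_0)=P(\Lambda_{k,j})\,P(\underline{s}\mid \underline{y}_{\underline{s}},\delta_k)\,I[\underline{\theta}\text{ is consistent with } d_0]$. Let $D_R=r_d(D_0)=\{(i,y_i): i\in s\}$ be the reduced data, where $s$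 is the unordered set of distinct labels appearing in $\underline{s}$. Then $D_R$ is a minimal sufficient statistic for $\underline{\theta}$.
   Context: A parameter vector $\underline{\theta}=(y_1,\dots,y_N)$ is consistent with data $d_R=\{(i,y_i'): i\in s\}$ (or with $d_0$) if for every sampled label $i$ the recorded response equals the $i$-th component of $\underline{\theta}$; $\Theta_{d_R}$ denotes the set of such $\underline{\theta}$. The strategy selected is recorded as part of the observed data $d_0$. Minimal sufficiency is in the usual sense for the family of distributions of $D_0$ indexed by $\underline{\theta}\in\mathbb{R}^N$. *)

theory Defs
  imports "HOL-Probability.Probability"
begin

text \<open>A statistic T of a discrete family of distributions P indexed by a parameter
  set Theta is sufficient if the conditional distribution of the data given T does
  not depend on the parameter, i.e. there is h with
  P_theta(D = d) = h d * P_theta(T(D) = T d) for all parameters and data points.\<close>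
definition sufficient_stat ::
  "'p set \<Rightarrow> ('p \<Rightarrow> 'd pmf) \<Rightarrow> ('d \<Rightarrow> 'b) \<Rightarrow> bool" where
  "sufficient_stat Theta P T \<longleftrightarrow>
     (\<exists>h. \<forall>th\<in>Theta. \<forall>d.
        pmf (P th) d = h d * measure_pmf.prob (P th) {x. T x = T d})"

definition family_support :: "'p set \<Rightarrow> ('p \<Rightarrow> 'd pmf) \<Rightarrow> 'd set" where
  "family_support Theta P = (\<Union>th\<in>Theta. set_pmf (P th))"

text \<open>A statistic is determined up to
  equivalence by the partition it induces, so it suffices to let S range over
  statistics with values in 'd set (e.g. its level sets).\<close>
definition minimal_sufficient_stat ::
  "'p set \<Rightarrow> ('p \<Rightarrow> 'd pmf) \<Rightarrow> ('d \<Rightarrow> 'b) \<Rightarrow> bool" where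
  "minimal_sufficient_stat Theta P T \<longleftrightarrow>
     sufficient_stat Theta P T \<and>
     (\<forall>S :: 'd \<Rightarrow> 'd set. sufficient_stat Theta P S \<longrightarrow>
        (\<forall>d\<in>family_support Theta P. \<forall>d'\<in>family_support Theta P.
            S d = S d' \<longrightarrow> T d = T d'))"

text \<open>Parameter vectors theta = (y_1,...,y_N), represented as functions on labels
  that vanish outside {1..N}.\<close>
definition param_space :: "nat \<Rightarrow> (nat \<Rightarrow> real) set" where
  "param_space N = {th. \<forall>i. i \<notin> {1..N} \<longrightarrow> th i = 0}"

definition consistent :: "(nat \<Rightarrow> real) \<Rightarrow> (nat \<times> real) list \<Rightarrow> bool" where
  "consistent th xs \<longleftrightarrow> (\<forall>(i, y)\<in>set xs. th i = y)"

definition reduced_data :: "('st \<times> (nat \<times> real) list) \<Rightarrow> (nat \<times> real) set" where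
  "reduced_data d0 = set (snd d0)"

end

theory Submission
  imports Defs
begin

text \<open>The likelihood of the full data is an indicator of the consistency of \<open>\<theta>\<close> with the
  reduced data, times a factor free of \<open>\<theta>\<close> (strategy probability and design probability).
  Such a likelihood makes the reduced data sufficient, since on each of its level sets the
  likelihood is either identically zero or does not depend on \<open>\<theta>\<close>. For minimality, two
  data points that any sufficient statistic identifies must have positive probability under
  the same parameters; and the set of parameters consistent with a set of recorded
  (label, response) pairs determines that set, because a missing pair can be violated by
  changing one coordinate of a consistent parameter.\<close>

lemma measure_pmf_prob_cong:
  assumes "\<And>x. x \<in> A \<Longrightarrow> pmf p x = pmf p' x"
  shows "measure_pmf.prob p A = measure_pmf.prob p' A"
  using assms by (simp add: measure_pmf_conv_infsetsum cong: infsetsum_cong)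

lemma pmf_le_measure_pmf:
  assumes "x \<in> A"
  shows "pmf p x \<le> measure_pmf.prob p A"
  using assms measure_pmf.finite_measure_mono[of "{x}" A p]
  by (simp add: measure_pmf_single)

lemma sufficient_stat_set_pmf_mono:
  assumes S: "sufficient_stat Theta P S"
    and d: "d \<in> family_support Theta P" and eq: "S d' = S d"
    and th: "th \<in> Theta" and d': "d' \<in> set_pmf (P th)"
  shows "d \<in> set_pmf (P th)"
proof -
  obtain h where h: "\<And>th d. th \<in> Theta \<Longrightarrow>
      pmf (P th) d = h d * measure_pmf.prob (P th) {x. S x = S d}"
    using S unfolding sufficient_stat_def by blast
  obtain th0 where "th0 \<in> Theta" "pmf (P th0) d \<noteq> 0"
    using d unfolding family_support_def by (auto simp: set_pmf_iff)
  then have "h d \<noteq> 0"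
    using h by fastforce
  moreover have "measure_pmf.prob (P th) {x. S x = S d} \<noteq> 0"
    using h[OF th, of d'] d' eq by (auto simp: set_pmf_iff)
  ultimately show ?thesis
    using h[OF th, of d] by (simp add: set_pmf_iff)
qed

lemma minimal_sufficient_statI:
  assumes "sufficient_stat Theta P T"
    and "\<And>d d'. d \<in> family_support Theta P \<Longrightarrow> d' \<in> family_support Theta P \<Longrightarrow>
           (\<And>th. th \<in> Theta \<Longrightarrow> d \<in> set_pmf (P th) \<longleftrightarrow> d' \<in> set_pmf (P th)) \<Longrightarrow> T d = T d'"
  shows "minimal_sufficient_stat Theta P T"
  unfolding minimal_sufficient_stat_def
  using assms sufficient_stat_set_pmf_mono by metis

locale indicator_family =
  fixes Theta :: "'p set" and P :: "'p \<Rightarrow> 'd pmf"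
    and C :: "'p \<Rightarrow> 't \<Rightarrow> bool" and T :: "'d \<Rightarrow> 't" and g :: "'d \<Rightarrow> real"
  assumes pmf_family: "\<And>th d. th \<in> Theta \<Longrightarrow> pmf (P th) d = (if C th (T d) then g d else 0)"
begin

lemma prob_level_set:
  assumes "th \<in> Theta" "th' \<in> Theta" "C th' (T d)"
  shows "measure_pmf.prob (P th) {x. T x = T d} =
    (if C th (T d) then measure_pmf.prob (P th') {x. T x = T d} else 0)"
proof (cases "C th (T d)")
  case True
  then show ?thesis
    using assms by (auto simp: pmf_family intro: measure_pmf_prob_cong)
next
  case False
  then have "set_pmf (P th) \<inter> {x. T x = T d} = {}"
    using assms(1) by (auto simp: set_pmf_iff pmf_family)
  then show ?thesis
    using False by (simp add: measure_pmf_zero_iff)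
qed

lemma sufficient: "sufficient_stat Theta P T"
proof -
  define th0 where "th0 d = (SOME th. th \<in> Theta \<and> C th (T d))" for d
  define h where "h d = g d / measure_pmf.prob (P (th0 d)) {x. T x = T d}" for d
  have "pmf (P th) d = h d * measure_pmf.prob (P th) {x. T x = T d}"
    if th: "th \<in> Theta" for th d
  proof (cases "C th (T d)")
    case True
    then have th0: "th0 d \<in> Theta" "C (th0 d) (T d)"
      using th unfolding th0_def by (metis (mono_tags, lifting) someI)+
    have "g d \<le> measure_pmf.prob (P th) {x. T x = T d}"
      using pmf_le_measure_pmf[of d "{x. T x = T d}" "P th"] th True by (simp add: pmf_family)
    moreover have "0 \<le> g d"
      using pmf_nonneg[of "P th" d] th True by (simp add: pmf_family)
    ultimately show ?thesis
      using prob_level_set[OF th th0] True th by (auto simp: h_def pmf_family)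
  next
    case False
    then have "set_pmf (P th) \<inter> {x. T x = T d} = {}"
      using th by (auto simp: set_pmf_iff pmf_family)
    then show ?thesis
      using False th by (simp add: pmf_family measure_pmf_zero_iff)
  qed
  then show ?thesis
    unfolding sufficient_stat_def by blast
qed

lemma set_pmf_iff_consistent:
  assumes "d \<in> family_support Theta P" "th \<in> Theta"
  shows "d \<in> set_pmf (P th) \<longleftrightarrow> C th (T d)"
proof -
  have "g d \<noteq> 0"
    using assms(1) unfolding family_support_def by (auto simp: set_pmf_iff pmf_family split: if_splits)
  then show ?thesis
    using assms(2) by (simp add: set_pmf_iff pmf_family)
qed

lemma minimal_sufficient:
  assumes identifiable: "\<And>t t'. \<exists>th\<in>Theta. C th t \<Longrightarrow>
      (\<And>th. th \<in> Theta \<Longrightarrow> C th t \<longleftrightarrow> C th t') \<Longrightarrow> t = t'"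
  shows "minimal_sufficient_stat Theta P T"
proof (rule minimal_sufficient_statI[OF sufficient])
  fix d d'
  assume d: "d \<in> family_support Theta P" and d': "d' \<in> family_support Theta P"
    and same_support: "\<And>th. th \<in> Theta \<Longrightarrow> d \<in> set_pmf (P th) \<longleftrightarrow> d' \<in> set_pmf (P th)"
  have "\<exists>th\<in>Theta. C th (T d)"
    using d set_pmf_iff_consistent[OF d] unfolding family_support_def by blast
  moreover have "C th (T d) \<longleftrightarrow> C th (T d')" if "th \<in> Theta" for th
    using same_support[OF that] set_pmf_iff_consistent[OF d that] set_pmf_iff_consistent[OF d' that]
    by blast
  ultimately show "T d = T d'"
    by (rule identifiable)
qed

end

definition consistent_obs :: "nat \<Rightarrow> (nat \<Rightarrow> real) \<Rightarrow> (nat \<times> real) set \<Rightarrow> bool" where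
  "consistent_obs N th A \<longleftrightarrow> fst ` A \<subseteq> {1..N} \<and> (\<forall>(i, y)\<in>A. th i = y)"

lemma consistent_obs_subset:
  assumes th: "th \<in> param_space N" "consistent_obs N th B"
    and B_imp_A: "\<And>th. th \<in> param_space N \<Longrightarrow> consistent_obs N th B \<Longrightarrow> consistent_obs N th A"
  shows "A \<subseteq> B"
proof
  fix p assume "p \<in> A"
  then obtain i y where p: "p = (i, y)" "(i, y) \<in> A"
    by (cases p) auto
  show "p \<in> B"
  proof (rule ccontr)
    assume "p \<notin> B"
    have i: "i \<in> {1..N}"
      using B_imp_A[OF th] p(2) unfolding consistent_obs_def by force
    define th' where "th' = (if th i = y then th(i := y + 1) else th)"
    have th': "th' \<in> param_space N"
      using th(1) i unfolding th'_def param_space_def by auto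
    have "consistent_obs N th' B"
      using th(2) \<open>p \<notin> B\<close> p(1) unfolding th'_def consistent_obs_def by auto
    moreover have "th' i \<noteq> y"
      unfolding th'_def by simp
    then have "\<not> consistent_obs N th' A"
      using p(2) unfolding consistent_obs_def by fast
    ultimately show False
      using B_imp_A[OF th'] by blast
  qed
qed

lemma consistent_obs_eqI:
  assumes "\<exists>th\<in>param_space N. consistent_obs N th A"
    and "\<And>th. th \<in> param_space N \<Longrightarrow> consistent_obs N th A \<longleftrightarrow> consistent_obs N th B"
  shows "A = B"
  using assms consistent_obs_subset[of _ N A B] consistent_obs_subset[of _ N B A] by blast

theorem mainTheorem1:
  fixes N T :: nat
    and V :: "nat \<Rightarrow> nat"
    and pS :: "nat \<times> nat \<Rightarrow> real"
    and q :: "nat \<Rightarrow> (nat \<times> real) list \<Rightarrow> real"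
    and P :: "(nat \<Rightarrow> real) \<Rightarrow> ((nat \<times> nat) \<times> (nat \<times> real) list) pmf"
  defines "Str \<equiv> {(k, j). 1 \<le> k \<and> k \<le> T \<and> 1 \<le> j \<and> j \<le> V k}"
  assumes family:
    "\<And>th lam xs. th \<in> param_space N \<Longrightarrow>
       pmf (P th) (lam, xs) =
         (if lam \<in> Str \<and> set (map fst xs) \<subseteq> {1..N} \<and> consistent th xs
          then pS lam * q (fst lam) xs else 0)"
  shows "minimal_sufficient_stat (param_space N) P reduced_data"
proof -
  define g where "g d = (if fst d \<in> Str then pS (fst d) * q (fst (fst d)) (snd d) else 0)" for d
  have "indicator_family (param_space N) P (consistent_obs N) reduced_data g"
  proof
    fix th and d :: "(nat \<times> nat) \<times> (nat \<times> real) list"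
    assume "th \<in> param_space N"
    then show "pmf (P th) d = (if consistent_obs N th (reduced_data d) then g d else 0)"
      using family[of th "fst d" "snd d"]
      by (simp add: g_def consistent_obs_def consistent_def reduced_data_def)
  qed
  then show ?thesis
    by (rule indicator_family.minimal_sufficient) (rule consistent_obs_eqI)
qed

end
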